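(* Let $F \subseteq \mathsf{L}_\mu$ and let $\mu\phi \in \Pi(F)$. Then there exist a formula $\mu\psi \in F$, a set of variables $V$ and a substitution $\theta\colon V \to \Pi(F)$ such that $\phi = \psi[\theta]$.
   Context: Formulas of the modal $\mu$-calculus ($\mathsf{L}_\mu$) are built from a countable set $\mathsf{Var}$ of variables and negated variables $\neg x$ ($x\in\mathsf{Var}$), together called literals, by the grammar: literals, $\square\alpha$, $\diamond\alpha$, $\bigwedge\Gamma$, $\bigvee\Gamma$ for finite sets $\Gamma$ of formulas, and $\mu\phi$, $\nu\phi$ for predicates $\phi=\lambda x.\alpha$ where $\alpha$ is $x$-positive (i.e. $\neg x$ does not occur in $\alpha$). Formulas and predicates are identified up to renaming of bound variables. Negation is the involution $\alpha\mapsto\alpha^\bot$ with $x^\bot=\neg x$, $(\neg x)^\bot=x$, $(\bigwedge\Gamma)^\bot=\bigvee\{\gamma^\bot:\gamma\in\Gamma\}$, $(\square\alpha)^\bot=\diamond\alpha^\bot$, $(\mu\lambda x.\alpha)^\bot=\nu\lambda x.(\alpha[x:=\neg x])^\bot$, and duals. A substitution is a map $\theta\colon V\to\mathsf{L}_\mu$ with $V\subseteq\mathsf{Var}$; $\eta[\theta]$ is the simultaneous capture-avoiding substitution of $\theta(x)$ for free occurrences of $x$ in $\eta$, where an occurrence $\neg x$ with $x\in V$ is replaced by $\theta(x)^\bot$; for predicates $(\lambda y.\alpha)[\theta]=\lambda y.\alpha[\theta]$ with $y$ fresh. A formula is $V$-positive if $\neg x$ does not occur in it for every $x\in V$. For $F\subseteq\mathsf{L}_\mu$,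 $\Pi(F)$ is the smallest set of formulas such that: (1) $F$ and all literals belong to $\Pi(F)$; (2) if $\Gamma\subseteq\Pi(F)$ finite then $\bigvee\Gamma,\bigwedge\Gamma\in\Pi(F)$; (3) if $\alpha\in\Pi(F)$ then $\square\alpha,\diamond\alpha\in\Pi(F)$; (4) if $\phi=\lambda x.\alpha$ with $\alpha\in\Pi(F)$ then $\nu\phi\in\Pi(F)$; (5) if $\alpha\in\Pi(F)$ is $V$-positive and $\theta\colon V\to\Pi(F)$, then $\alpha[\theta]\in\Pi(F)$. *)

theory Defs
  imports Main "HOL-Library.FSet"
begin

(* Locally nameless representation of the modal mu-calculus.
   Free variables are named (Var = nat); bound variables are de Bruijn indices.
   Thus formulas identified up to renaming of bound variables are represented
   by syntactic equality.  Bound variables only ever occur positively, since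
   the body of a fixpoint must be positive in the bound variable.
   A predicate lambda x. alpha is represented by its body (with x as BVar 0). *)

type_synonym var = nat

datatype form =
    FVar var
  | NVar var
  | BVar nat
  | Box form
  | Dia form
  | Conj "form fset"
  | Disj "form fset"
  | Mu form
  | Nu form

primrec wf :: "form \<Rightarrow> nat \<Rightarrow> bool" where
  "wf (FVar x) n = True"
| "wf (NVar x) n = True"
| "wf (BVar i) n = (i < n)"
| "wf (Box a) n = wf a n"
| "wf (Dia a) n = wf a n"
| "wf (Conj G) n = (\<forall>b \<in> fset (fimage (\<lambda>g. wf g n) G). b)"
| "wf (Disj G) n = (\<forall>b \<in> fset (fimage (\<lambda>g. wf g n) G). b)"
| "wf (Mu a) n = wf a (Suc n)"
| "wf (Nu a) n = wf a (Suc n)"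

definition Lmu :: "form set" where
  "Lmu = {a. wf a 0}"

primrec nvars :: "form \<Rightarrow> var set" where
  "nvars (FVar x) = {}"
| "nvars (NVar x) = {x}"
| "nvars (BVar i) = {}"
| "nvars (Box a) = nvars a"
| "nvars (Dia a) = nvars a"
| "nvars (Conj G) = \<Union> (fset (fimage nvars G))"
| "nvars (Disj G) = \<Union> (fset (fimage nvars G))"
| "nvars (Mu a) = nvars a"
| "nvars (Nu a) = nvars a"

definition positive :: "var set \<Rightarrow> form \<Rightarrow> bool" where
  "positive V a \<longleftrightarrow> nvars a \<inter> V = {}"

primrec dual :: "form \<Rightarrow> form" where
  "dual (FVar x) = NVar x"
| "dual (NVar x) = FVar x"
| "dual (BVar i) = BVar i"
| "dual (Box a) = Dia (dual a)"
| "dual (Dia a) = Box (dual a)"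
| "dual (Conj G) = Disj (fimage dual G)"
| "dual (Disj G) = Conj (fimage dual G)"
| "dual (Mu a) = Nu (dual a)"
| "dual (Nu a) = Mu (dual a)"

(* simultaneous substitution eta[theta] for theta : V \<rightarrow> L_mu;
   capture avoidance is automatic in the locally nameless representation *)
primrec subst :: "var set \<Rightarrow> (var \<Rightarrow> form) \<Rightarrow> form \<Rightarrow> form" where
  "subst V \<theta> (FVar x) = (if x \<in> V then \<theta> x else FVar x)"
| "subst V \<theta> (NVar x) = (if x \<in> V then dual (\<theta> x) else NVar x)"
| "subst V \<theta> (BVar i) = BVar i"
| "subst V \<theta> (Box a) = Box (subst V \<theta> a)"
| "subst V \<theta> (Dia a) = Dia (subst V \<theta> a)"
| "subst V \<theta> (Conj G) = Conj (fimage (subst V \<theta>) G)"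
| "subst V \<theta> (Disj G) = Disj (fimage (subst V \<theta>) G)"
| "subst V \<theta> (Mu a) = Mu (subst V \<theta> a)"
| "subst V \<theta> (Nu a) = Nu (subst V \<theta> a)"

(* abstraction: turn free variable x into the bound variable at depth k;
   the predicate lambda x. alpha is represented by close_at 0 x alpha *)
primrec close_at :: "nat \<Rightarrow> var \<Rightarrow> form \<Rightarrow> form" where
  "close_at k x (FVar y) = (if y = x then BVar k else FVar y)"
| "close_at k x (NVar y) = NVar y"
| "close_at k x (BVar i) = BVar i"
| "close_at k x (Box a) = Box (close_at k x a)"
| "close_at k x (Dia a) = Dia (close_at k x a)"
| "close_at k x (Conj G) = Conj (fimage (close_at k x) G)"
| "close_at k x (Disj G) = Disj (fimage (close_at k x) G)"
| "close_at k x (Mu a) = Mu (close_at (Suc k) x a)"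
| "close_at k x (Nu a) = Nu (close_at (Suc k) x a)"

inductive_set Pi :: "form set \<Rightarrow> form set" for F :: "form set" where
  base: "a \<in> F \<Longrightarrow> a \<in> Pi F"
| lit_pos: "FVar x \<in> Pi F"
| lit_neg: "NVar x \<in> Pi F"
| disj: "(\<forall>g \<in> fset G. g \<in> Pi F) \<Longrightarrow> Disj G \<in> Pi F"
| conj: "(\<forall>g \<in> fset G. g \<in> Pi F) \<Longrightarrow> Conj G \<in> Pi F"
| box: "a \<in> Pi F \<Longrightarrow> Box a \<in> Pi F"
| dia: "a \<in> Pi F \<Longrightarrow> Dia a \<in> Pi F"
| nu: "a \<in> Pi F \<Longrightarrow> positive {x} a \<Longrightarrow> Nu (close_at 0 x a) \<in> Pi F"
| subst: "a \<in> Pi F \<Longrightarrow> positive V a \<Longrightarrow> (\<forall>x \<in> V. \<theta> x \<in> Pi F)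
          \<Longrightarrow> subst V \<theta> a \<in> Pi F"

end

theory Submission
  imports Defs
begin

(* Induction on the derivation of Mu \<phi> \<in> Pi F, with the invariant that \<phi> is a
   positive substitution instance of the body of a \<mu>-formula in F.  A \<mu>-formula can only
   arise from the base rule, or from substitution either into a variable (apply the
   induction hypothesis to the substituted formula) or into a \<mu>-formula (compose the two
   substitutions).  Keeping the instance positive in the substituted variables is what
   makes the composite substitution land in Pi F again. *)

lemma subst_empty [simp]: "subst {} \<theta> a = a"
  by (induction a) (simp_all add: fset.map_ident_strong)

lemma nvars_diff_subset_nvars_subst: "nvars a - V \<subseteq> nvars (subst V \<theta> a)"
  by (induction a) fastforce+

lemma subst_subst:
  assumes "positive V' a" and "positive V (subst V' \<theta>' a)"
  shows "subst V \<theta> (subst V' \<theta>' a) =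
    subst (V' \<union> V) (\<lambda>x. if x \<in> V' \<and> positive V (\<theta>' x) then subst V \<theta> (\<theta>' x)
                         else if x \<in> V' then \<theta>' x else \<theta> x) a"
  using assms
proof (induction a)
  case (Conj G)
  then show ?case by (simp add: positive_def fset.map_comp) (rule fimage_cong; fastforce)
next
  case (Disj G)
  then show ?case by (simp add: positive_def fset.map_comp) (rule fimage_cong; fastforce)
qed (auto simp: positive_def)

definition mu_instance :: "form set \<Rightarrow> form \<Rightarrow> bool" where
  "mu_instance F \<phi> \<longleftrightarrow>
    (\<exists>\<psi> V \<theta>. Mu \<psi> \<in> F \<and> positive V \<psi> \<and> (\<forall>x \<in> V. \<theta> x \<in> Pi F) \<and> \<phi> = subst V \<theta> \<psi>)"

lemma mu_instance_subst:
  assumes "mu_instance F \<phi>" and "positive V \<phi>" and \<theta>: "\<forall>x \<in> V. \<theta> x \<in> Pi F"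
  shows "mu_instance F (subst V \<theta> \<phi>)"
proof -
  obtain \<psi> V' \<theta>' where \<psi>: "Mu \<psi> \<in> F" and pos: "positive V' \<psi>" and \<theta>': "\<forall>x \<in> V'. \<theta>' x \<in> Pi F"
    and \<phi>: "\<phi> = subst V' \<theta>' \<psi>"
    using assms(1) unfolding mu_instance_def by blast
  (* Only those \<theta>' x with x free in \<psi> matter, and they are V-positive because \<phi> is;
     the case distinction keeps the remaining values inside Pi F. *)
  define \<theta>'' where "\<theta>'' x = (if x \<in> V' \<and> positive V (\<theta>' x) then subst V \<theta> (\<theta>' x)
                          else if x \<in> V' then \<theta>' x else \<theta> x)" for x
  have "subst V \<theta> \<phi> = subst (V' \<union> V) \<theta>'' \<psi>"
    unfolding \<phi> \<theta>''_def using pos assms(2) \<phi> by (intro subst_subst) simp_all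
  moreover have "positive (V' \<union> V) \<psi>"
    using pos assms(2) nvars_diff_subset_nvars_subst[of \<psi> V' \<theta>']
    unfolding \<phi> positive_def by blast
  moreover have "\<theta>'' x \<in> Pi F" if "x \<in> V' \<union> V" for x
    using that \<theta> \<theta>' Pi.subst[of "\<theta>' x" F V \<theta>] by (auto simp: \<theta>''_def)
  ultimately show ?thesis
    using \<psi> unfolding mu_instance_def by blast
qed

lemma Pi_Mu_mu_instance:
  assumes "a \<in> Pi F" and "a = Mu \<phi>"
  shows "mu_instance F \<phi>"
  using assms
proof (induction a arbitrary: \<phi> rule: Pi.induct)
  case (base a)
  then show ?case
    unfolding mu_instance_def positive_def by (intro exI[of _ \<phi>] exI[of _ "{}"]) simp
next
  case (subst a V \<theta>)
  show ?case
  proof (cases a)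
    case (FVar x)
    with subst show ?thesis by (auto split: if_splits)
  next
    case (NVar x)
    with subst show ?thesis by (auto simp: positive_def)
  next
    case (Mu a')
    with subst show ?thesis by (auto simp: positive_def intro: mu_instance_subst)
  qed (use subst in simp_all)
qed simp_all

theorem lemma2p1:
  fixes F :: "form set" and \<phi> :: form
  assumes "F \<subseteq> Lmu"
    and "Mu \<phi> \<in> Pi F"
  shows "\<exists>\<psi> V \<theta>. Mu \<psi> \<in> F \<and> (\<forall>x \<in> V. \<theta> x \<in> Pi F) \<and> \<phi> = subst V \<theta> \<psi>"
  using Pi_Mu_mu_instance[OF assms(2) refl] unfolding mu_instance_def by blast

end
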